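(* Let $R$ be a commutative ring and $\mathbf n=(n_1,\dots,n_s)$ positive integers with $\sum n_i=n$. Then $H^i(\mathcal{P}_{\mathbf n}(R),\mathrm{M}_n(R)/\mathcal{P}_{\mathbf n}(R))=0$ for all $i\ge0$.
   Context: $\mathcal{P}_{\mathbf n}(R)=\{(a_{ij})\in\mathrm{M}_n(R)\mid a_{ij}=0 \text{ if } \sum_{k\le t}n_k<i\le\sum_{k\le t+1}n_k \text{ and } j\le\sum_{k\le t}n_k\}$, the block upper triangular matrices with diagonal blocks of sizes $n_1,\dots,n_s$. $H^i$ is Hochschild cohomology; $\mathrm{M}_n(R)/\mathcal{P}_{\mathbf n}(R)$ is a bimodule via matrix multiplication. *)

theory Defs
  imports Main
begin

text \<open>Matrices over a commutative ring 'r: functions nat => nat => 'r,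
  an n x n matrix being one whose entries outside [0,n) x [0,n) vanish.
  Indices are 0-based.\<close>

type_synonym 'r mat = "nat \<Rightarrow> nat \<Rightarrow> 'r"

definition mzero :: "'r::comm_ring_1 mat" where
  "mzero = (\<lambda>i j. 0)"

definition madd :: "'r::comm_ring_1 mat \<Rightarrow> 'r mat \<Rightarrow> 'r mat" where
  "madd A B = (\<lambda>i j. A i j + B i j)"

definition msmult :: "'r::comm_ring_1 \<Rightarrow> 'r mat \<Rightarrow> 'r mat" where
  "msmult c A = (\<lambda>i j. c * A i j)"

definition mat_mult :: "nat \<Rightarrow> 'r::comm_ring_1 mat \<Rightarrow> 'r mat \<Rightarrow> 'r mat" where
  "mat_mult n A B = (\<lambda>i j. \<Sum>k<n. A i k * B k j)"

definition mats :: "nat \<Rightarrow> 'r::comm_ring_1 mat set" where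
  "mats n = {A. \<forall>i j. (n \<le> i \<or> n \<le> j) \<longrightarrow> A i j = 0}"

definition psum :: "nat list \<Rightarrow> nat \<Rightarrow> nat" where
  "psum ns t = sum_list (take t ns)"

text \<open>Position (i,j) (0-based) is forced to be zero in P_n(R): the 1-based row
  index i+1 satisfies psum t < i+1 <= psum (t+1) and the 1-based column j+1 <= psum t.\<close>
definition forced_zero :: "nat list \<Rightarrow> nat \<Rightarrow> nat \<Rightarrow> bool" where
  "forced_zero ns i j =
     (\<exists>t<length ns. psum ns t < Suc i \<and> Suc i \<le> psum ns (Suc t) \<and> Suc j \<le> psum ns t)"

definition Pn :: "'r itself \<Rightarrow> nat list \<Rightarrow> 'r::comm_ring_1 mat set" where
  "Pn R ns = {A \<in> mats (sum_list ns). \<forall>i j. forced_zero ns i j \<longrightarrow> A i j = 0}"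

text \<open>The quotient bimodule M_n(R)/P_n(R), realised by canonical representatives:
  proj keeps exactly the entries at the positions forced to vanish in P_n(R);
  its kernel on M_n(R) is P_n(R), so M_n(R)/P_n(R) is identified with the image Qn.\<close>
definition proj :: "nat list \<Rightarrow> 'r::comm_ring_1 mat \<Rightarrow> 'r mat" where
  "proj ns A = (\<lambda>i j. if forced_zero ns i j then A i j else 0)"

definition Qn :: "'r itself \<Rightarrow> nat list \<Rightarrow> 'r::comm_ring_1 mat set" where
  "Qn R ns = proj ns ` mats (sum_list ns)"

definition lact :: "nat list \<Rightarrow> 'r::comm_ring_1 mat \<Rightarrow> 'r mat \<Rightarrow> 'r mat" where
  "lact ns a m = proj ns (mat_mult (sum_list ns) a m)"

definition ract :: "nat list \<Rightarrow> 'r::comm_ring_1 mat \<Rightarrow> 'r mat \<Rightarrow> 'r mat" where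
  "ract ns m a = proj ns (mat_mult (sum_list ns) m a)"

text \<open>An i-tuple is encoded as x :: nat => 'r mat with x k in P_n(R) for k < i and
  x k = 0 for k >= i; cochains are only considered on such tuples.\<close>
definition tuples :: "'r itself \<Rightarrow> nat list \<Rightarrow> nat \<Rightarrow> (nat \<Rightarrow> 'r::comm_ring_1 mat) set" where
  "tuples R ns i = {x. (\<forall>k<i. x k \<in> Pn R ns) \<and> (\<forall>k\<ge>i. x k = mzero)}"

definition cochain :: "'r itself \<Rightarrow> nat list \<Rightarrow> nat \<Rightarrow> ((nat \<Rightarrow> 'r::comm_ring_1 mat) \<Rightarrow> 'r mat) \<Rightarrow> bool" where
  "cochain R ns i f =
     ((\<forall>x\<in>tuples R ns i. f x \<in> Qn R ns) \<and>
      (\<forall>x\<in>tuples R ns i. \<forall>k<i. \<forall>a\<in>Pn R ns. \<forall>b\<in>Pn R ns.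
          f (x(k := madd a b)) = madd (f (x(k := a))) (f (x(k := b)))) \<and>
      (\<forall>x\<in>tuples R ns i. \<forall>k<i. \<forall>a\<in>Pn R ns. \<forall>c::'r.
          f (x(k := msmult c a)) = msmult c (f (x(k := a)))))"

definition merge :: "nat \<Rightarrow> nat \<Rightarrow> (nat \<Rightarrow> 'r::comm_ring_1 mat) \<Rightarrow> nat \<Rightarrow> 'r mat" where
  "merge n k x = (\<lambda>j. if j < k then x j else if j = k then mat_mult n (x k) (x (Suc k)) else x (Suc j))"

definition hoch_d :: "nat list \<Rightarrow> nat \<Rightarrow> ((nat \<Rightarrow> 'r::comm_ring_1 mat) \<Rightarrow> 'r mat)
                      \<Rightarrow> (nat \<Rightarrow> 'r mat) \<Rightarrow> 'r mat" where
  "hoch_d ns i f x = (\<lambda>p q.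
       lact ns (x 0) (f (\<lambda>k. x (Suc k))) p q
     + (\<Sum>k<i. (-1) ^ Suc k * f (merge (sum_list ns) k x) p q)
     + (-1) ^ Suc i * ract ns (f (\<lambda>k. if k < i then x k else mzero)) (x i) p q)"

definition HH_vanishes :: "'r::comm_ring_1 itself \<Rightarrow> nat list \<Rightarrow> nat \<Rightarrow> bool" where
  "HH_vanishes R ns i =
     (\<forall>f. cochain R ns i f \<and> (\<forall>x\<in>tuples R ns (Suc i). hoch_d ns i f x = mzero) \<longrightarrow>
        (if i = 0 then (\<forall>x\<in>tuples R ns 0. f x = mzero)
         else (\<exists>g. cochain R ns (i - 1) g \<and> (\<forall>x\<in>tuples R ns i. f x = hoch_d ns (i - 1) g x))))"

end

theory Submission
  imports Defs
begin

text \<open>A cochain with values in M_n(R)/P_n(R) only has nonzero entries (r,c) with r in some row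
  block t and c left of that block. A cocycle f of degree j+1 is killed one row block at a
  time, from the bottom up. Suppose f vanishes on all rows after block t > 0, let z be the
  last column of block t-1, and put
    g(x_1,...,x_j)_{rc} = (-1)^{j+1} f(x_1,...,x_j,E_{cz})_{rz}
  for r in block t and c left of it. The cocycle identity of f at (x_1,...,x_j,E_{cz}), read
  in entry (r,z), says precisely that f and dg agree on block t, so f - dg vanishes from
  block t on. Row block 0 carries no such entries, which ends the descent. In degree 0 the
  cocycle identity at a diagonal unit E_{rr} gives f = 0.\<close>

section \<open>Block structure\<close>

lemma psum_0 [simp]: "psum ns 0 = 0"
  by (simp add: psum_def)

lemma psum_mono: "t \<le> t' \<Longrightarrow> psum ns t \<le> psum ns t'"
  by (metis le_add_diff_inverse le_add1 psum_def sum_list_append take_add)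

lemma psum_le_sum_list: "psum ns t \<le> sum_list ns"
  by (metis append_take_drop_id le_add1 psum_def sum_list_append)

lemma psum_length: "length ns \<le> t \<Longrightarrow> psum ns t = sum_list ns"
  by (simp add: psum_def)

lemma psum_Suc: "t < length ns \<Longrightarrow> psum ns (Suc t) = psum ns t + ns ! t"
  by (simp add: psum_def take_Suc_conv_app_nth)

lemma psum_less_Suc:
  assumes "\<forall>m\<in>set ns. 0 < m" and "t < length ns"
  shows "psum ns t < psum ns (Suc t)"
  using assms by (simp add: psum_Suc)

lemma block_of_index:
  assumes "k < sum_list ns"
  shows "\<exists>t<length ns. psum ns t \<le> k \<and> k < psum ns (Suc t)"
proof -
  have ex: "k < psum ns (length ns)" using assms psum_length by simp
  define t0 where "t0 = (LEAST t. k < psum ns t)"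
  have t0: "k < psum ns t0" unfolding t0_def by (rule LeastI, rule ex)
  have t0_le: "t0 \<le> length ns" unfolding t0_def by (rule Least_le, rule ex)
  have "t0 \<noteq> 0" using t0 by (metis less_nat_zero_code psum_0)
  then obtain t where t: "t0 = Suc t" by (cases t0) auto
  have "\<not> k < psum ns t" using t unfolding t0_def by (metis lessI not_less_Least)
  then show ?thesis using t0 t t0_le by (intro exI[of _ t]) auto
qed

lemma forced_zero_iff: "forced_zero ns r c \<longleftrightarrow>
   (\<exists>t<length ns. psum ns t \<le> r \<and> r < psum ns (Suc t) \<and> c < psum ns t)"
  unfolding forced_zero_def by (auto simp: less_Suc_eq_le Suc_le_eq)

lemma forced_zero_in_block:
  assumes "t < length ns" "psum ns t \<le> r" "r < psum ns (Suc t)"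
  shows "forced_zero ns r c \<longleftrightarrow> c < psum ns t"
proof
  assume "forced_zero ns r c"
  then obtain t' where t': "psum ns t' \<le> r" "r < psum ns (Suc t')" "c < psum ns t'"
    using forced_zero_iff by blast
  have "t' = t"
  proof (rule ccontr)
    assume "t' \<noteq> t"
    then have "Suc t' \<le> t \<or> Suc t \<le> t'" by auto
    then show False using psum_mono[of "Suc t'" t ns] psum_mono[of "Suc t" t' ns] t' assms by auto
  qed
  then show "c < psum ns t" using t' by simp
next
  assume "c < psum ns t"
  then show "forced_zero ns r c" using assms forced_zero_iff by blast
qed

lemma forced_zero_bounded: "forced_zero ns r c \<Longrightarrow> r < sum_list ns \<and> c < sum_list ns"
  unfolding forced_zero_iff using psum_le_sum_list by (metis order.strict_trans2)

lemma not_forced_zero_diag: "\<not> forced_zero ns r r"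
  unfolding forced_zero_iff by auto

lemma forced_zero_first_block:
  "r < psum ns (Suc 0) \<Longrightarrow> \<not> forced_zero ns r c"
  unfolding forced_zero_iff
  by (metis Suc_leI le_less_trans less_nat_zero_code not_le psum_0 psum_mono)

lemma forced_zero_below:
  assumes "psum ns t \<le> r" "r < sum_list ns" "c < psum ns t"
  shows "forced_zero ns r c"
proof -
  obtain t' where t': "t' < length ns" "psum ns t' \<le> r" "r < psum ns (Suc t')"
    using block_of_index assms(2) by blast
  have "t \<le> t'"
    using psum_mono[of "Suc t'" t ns] t' assms by (metis not_less_eq_eq order.strict_trans2 not_le)
  then have "c < psum ns t'" using psum_mono[of t t' ns] assms by simp
  then show ?thesis using t' forced_zero_iff by blast
qed

lemma forced_zero_trans:
  assumes "forced_zero ns i j" "\<not> forced_zero ns i k" "k < sum_list ns"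
  shows "forced_zero ns k j"
proof -
  obtain t where t: "t < length ns" "psum ns t \<le> i" "i < psum ns (Suc t)" "j < psum ns t"
    using assms(1) forced_zero_iff by blast
  have "\<not> k < psum ns t" using assms(2) t forced_zero_in_block by blast
  then show ?thesis using forced_zero_below[of ns t k j] t assms(3) by simp
qed

section \<open>The bimodule M_n(R)/P_n(R)\<close>

lemma Pn_iff: "A \<in> Pn R ns \<longleftrightarrow>
   (\<forall>i j. (sum_list ns \<le> i \<or> sum_list ns \<le> j) \<longrightarrow> A i j = 0) \<and>
   (\<forall>i j. forced_zero ns i j \<longrightarrow> A i j = 0)"
  by (simp add: Pn_def mats_def)

lemma Pn_forced_zero: "A \<in> Pn R ns \<Longrightarrow> forced_zero ns i j \<Longrightarrow> A i j = 0"
  by (simp add: Pn_iff)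

lemma Pn_outside: "A \<in> Pn R ns \<Longrightarrow> sum_list ns \<le> i \<Longrightarrow> A i j = 0"
  by (simp add: Pn_iff)

lemma Qn_iff: "A \<in> Qn R ns \<longleftrightarrow> (\<forall>i j. \<not> forced_zero ns i j \<longrightarrow> A i j = 0)"
proof
  assume "A \<in> Qn R ns"
  then show "\<forall>i j. \<not> forced_zero ns i j \<longrightarrow> A i j = 0" by (auto simp: Qn_def proj_def)
next
  assume A: "\<forall>i j. \<not> forced_zero ns i j \<longrightarrow> A i j = 0"
  then have "A \<in> mats (sum_list ns)"
    unfolding mats_def using forced_zero_bounded by fastforce
  moreover have "proj ns A = A" using A by (auto simp: proj_def fun_eq_iff)
  ultimately show "A \<in> Qn R ns" unfolding Qn_def by (metis image_eqI)
qed

lemma Qn_mats: "A \<in> Qn R ns \<Longrightarrow> A \<in> mats (sum_list ns)"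
  unfolding Qn_def proj_def mats_def by (auto simp: forced_zero_bounded)

lemma mzero_Pn: "mzero \<in> Pn R ns"
  by (simp add: Pn_iff mzero_def)

lemma msmult_Pn: "a \<in> Pn R ns \<Longrightarrow> msmult c a \<in> Pn R ns"
  by (simp add: Pn_iff msmult_def)

lemma madd_Qn: "a \<in> Qn R ns \<Longrightarrow> b \<in> Qn R ns \<Longrightarrow> madd a b \<in> Qn R ns"
  by (simp add: Qn_iff madd_def)

lemma msmult_Qn: "a \<in> Qn R ns \<Longrightarrow> msmult c a \<in> Qn R ns"
  by (simp add: Qn_iff msmult_def)

lemma mat_mult_Pn:
  assumes a: "a \<in> Pn R ns" and b: "b \<in> Pn R ns"
  shows "mat_mult (sum_list ns) a b \<in> Pn R ns"
  unfolding Pn_iff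
proof (intro conjI allI impI)
  fix i j
  assume "sum_list ns \<le> i \<or> sum_list ns \<le> j"
  then show "mat_mult (sum_list ns) a b i j = 0"
    using a b by (auto simp: Pn_iff mat_mult_def)
next
  fix i j
  assume ij: "forced_zero ns i j"
  have "a i k * b k j = 0" if "k < sum_list ns" for k
    using forced_zero_trans[OF ij _ that] Pn_forced_zero[OF a] Pn_forced_zero[OF b]
    by (cases "forced_zero ns i k") auto
  then show "mat_mult (sum_list ns) a b i j = 0" by (simp add: mat_mult_def)
qed

lemma mat_mult_assoc: "mat_mult n (mat_mult n a b) c = mat_mult n a (mat_mult n b c)"
proof (rule ext, rule ext)
  fix i j
  have "(\<Sum>k<n. (\<Sum>l<n. a i l * b l k) * c k j) = (\<Sum>k<n. \<Sum>l<n. a i l * b l k * c k j)"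
    by (simp add: sum_distrib_right)
  also have "\<dots> = (\<Sum>l<n. \<Sum>k<n. a i l * b l k * c k j)" by (rule sum.swap)
  also have "\<dots> = (\<Sum>l<n. a i l * (\<Sum>k<n. b l k * c k j))"
    by (simp add: sum_distrib_left mult.assoc)
  finally show "mat_mult n (mat_mult n a b) c i j = mat_mult n a (mat_mult n b c) i j"
    by (simp add: mat_mult_def)
qed

text \<open>Multiplication by P_n(R) preserves the kernel of proj, which makes lact and ract
  well defined on the quotient.\<close>

lemma proj_mult_proj_right:
  assumes a: "a \<in> Pn R ns"
  shows "proj ns (mat_mult (sum_list ns) a (proj ns M)) = proj ns (mat_mult (sum_list ns) a M)"
proof (intro ext)
  fix p q
  have "a p k * proj ns M k q = a p k * M k q"
    if "forced_zero ns p q" "k < sum_list ns" for k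
    using forced_zero_trans[of ns p q k] that Pn_forced_zero[OF a]
    by (cases "forced_zero ns p k") (auto simp: proj_def)
  then show "proj ns (mat_mult (sum_list ns) a (proj ns M)) p q =
      proj ns (mat_mult (sum_list ns) a M) p q"
    by (auto simp: proj_def mat_mult_def intro: sum.cong)
qed

lemma proj_mult_proj_left:
  assumes b: "b \<in> Pn R ns"
  shows "proj ns (mat_mult (sum_list ns) (proj ns M) b) = proj ns (mat_mult (sum_list ns) M b)"
proof (intro ext)
  fix p q
  have "proj ns M p k * b k q = M p k * b k q"
    if "forced_zero ns p q" "k < sum_list ns" for k
    using forced_zero_trans[of ns p q k] that Pn_forced_zero[OF b]
    by (cases "forced_zero ns p k") (auto simp: proj_def)
  then show "proj ns (mat_mult (sum_list ns) (proj ns M) b) p q =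
      proj ns (mat_mult (sum_list ns) M b) p q"
    by (auto simp: proj_def mat_mult_def intro: sum.cong)
qed

lemma lact_lact:
  "a \<in> Pn R ns \<Longrightarrow> lact ns a (lact ns b m) = lact ns (mat_mult (sum_list ns) a b) m"
  by (simp add: lact_def proj_mult_proj_right mat_mult_assoc)

lemma ract_ract:
  "b \<in> Pn R ns \<Longrightarrow> ract ns (ract ns m a) b = ract ns m (mat_mult (sum_list ns) a b)"
  by (simp add: ract_def proj_mult_proj_left mat_mult_assoc)

lemma lact_ract:
  "a \<in> Pn R ns \<Longrightarrow> b \<in> Pn R ns \<Longrightarrow> lact ns a (ract ns m b) = ract ns (lact ns a m) b"
  by (simp add: lact_def ract_def proj_mult_proj_right proj_mult_proj_left mat_mult_assoc)

lemma lact_eq: "lact ns a m p q =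
   (if forced_zero ns p q then (\<Sum>k<sum_list ns. a p k * m k q) else 0)"
  by (simp add: lact_def proj_def mat_mult_def)

lemma ract_eq: "ract ns m a p q =
   (if forced_zero ns p q then (\<Sum>k<sum_list ns. m p k * a k q) else 0)"
  by (simp add: ract_def proj_def mat_mult_def)

section \<open>Hochschild cochains\<close>

definition tuple_tl :: "(nat \<Rightarrow> 'a) \<Rightarrow> nat \<Rightarrow> 'a" where
  "tuple_tl x = (\<lambda>k. x (Suc k))"

definition tuple_take :: "nat \<Rightarrow> (nat \<Rightarrow> 'r::comm_ring_1 mat) \<Rightarrow> nat \<Rightarrow> 'r mat" where
  "tuple_take i x = (\<lambda>k. if k < i then x k else mzero)"

lemma hoch_d_apply: "hoch_d ns i f x p q =
     lact ns (x 0) (f (tuple_tl x)) p q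
   + (\<Sum>k<i. (-1) ^ Suc k * f (merge (sum_list ns) k x) p q)
   + (-1) ^ Suc i * ract ns (f (tuple_take i x)) (x i) p q"
  by (simp add: hoch_d_def tuple_tl_def tuple_take_def)

lemma hoch_d_eq: "hoch_d ns i f x = (\<lambda>p q.
     lact ns (x 0) (f (tuple_tl x)) p q
   + (\<Sum>k<i. (-1) ^ Suc k * f (merge (sum_list ns) k x) p q)
   + (-1) ^ Suc i * ract ns (f (tuple_take i x)) (x i) p q)"
  by (simp add: hoch_d_def tuple_tl_def tuple_take_def)

lemma tuples_iff: "x \<in> tuples R ns i \<longleftrightarrow> (\<forall>k<i. x k \<in> Pn R ns) \<and> (\<forall>k\<ge>i. x k = mzero)"
  by (simp add: tuples_def)

lemma tuples_Pn: "x \<in> tuples R ns i \<Longrightarrow> x k \<in> Pn R ns"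
  by (cases "k < i") (auto simp: tuples_iff mzero_Pn)

lemma tuple_tl_tuples: "x \<in> tuples R ns (Suc i) \<Longrightarrow> tuple_tl x \<in> tuples R ns i"
  by (auto simp: tuples_iff tuple_tl_def)

lemma tuple_take_tuples: "x \<in> tuples R ns j \<Longrightarrow> i \<le> j \<Longrightarrow> tuple_take i x \<in> tuples R ns i"
  by (auto simp: tuples_iff tuple_take_def)

lemma merge_tuples:
  assumes x: "x \<in> tuples R ns (Suc i)" and k: "k < i"
  shows "merge (sum_list ns) k x \<in> tuples R ns i"
  using x k by (auto simp: merge_def tuples_iff intro!: mat_mult_Pn)

definition Pn_linear :: "'r itself \<Rightarrow> nat list \<Rightarrow> ('r::comm_ring_1 mat \<Rightarrow> 'r mat) \<Rightarrow> bool" where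
  "Pn_linear R ns \<phi> \<longleftrightarrow>
     (\<forall>a\<in>Pn R ns. \<forall>b\<in>Pn R ns. \<phi> (madd a b) = madd (\<phi> a) (\<phi> b)) \<and>
     (\<forall>a\<in>Pn R ns. \<forall>c. \<phi> (msmult c a) = msmult c (\<phi> a))"

lemma cochain_iff: "cochain R ns i f \<longleftrightarrow>
   (\<forall>x\<in>tuples R ns i. f x \<in> Qn R ns) \<and>
   (\<forall>x\<in>tuples R ns i. \<forall>k<i. Pn_linear R ns (\<lambda>v. f (x(k:=v))))"
  by (auto simp: cochain_def Pn_linear_def)

lemma cochain_Qn: "cochain R ns i f \<Longrightarrow> x \<in> tuples R ns i \<Longrightarrow> f x \<in> Qn R ns"
  by (simp add: cochain_iff)

lemma cochain_linear:
  "cochain R ns i f \<Longrightarrow> x \<in> tuples R ns i \<Longrightarrow> k < i \<Longrightarrow> Pn_linear R ns (\<lambda>v. f (x(k:=v)))"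
  by (simp add: cochain_iff)

lemma Pn_linearI:
  assumes "\<And>a b p q. a \<in> Pn R ns \<Longrightarrow> b \<in> Pn R ns \<Longrightarrow> \<phi> (madd a b) p q = \<phi> a p q + \<phi> b p q"
    and "\<And>a c p q. a \<in> Pn R ns \<Longrightarrow> \<phi> (msmult c a) p q = c * \<phi> a p q"
  shows "Pn_linear R ns \<phi>"
  using assms by (auto simp: Pn_linear_def madd_def msmult_def fun_eq_iff)

lemma Pn_linear_add:
  "Pn_linear R ns \<phi> \<Longrightarrow> a \<in> Pn R ns \<Longrightarrow> b \<in> Pn R ns \<Longrightarrow> \<phi> (madd a b) p q = \<phi> a p q + \<phi> b p q"
  by (simp add: Pn_linear_def madd_def)

lemma Pn_linear_smult:
  "Pn_linear R ns \<phi> \<Longrightarrow> a \<in> Pn R ns \<Longrightarrow> \<phi> (msmult c a) p q = c * \<phi> a p q"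
  by (simp add: Pn_linear_def msmult_def)

lemma Pn_linear_zero: "Pn_linear R ns \<phi> \<Longrightarrow> \<phi> mzero = mzero"
  using Pn_linear_smult[of R ns \<phi> mzero 0] mzero_Pn
  by (auto simp: msmult_def mzero_def fun_eq_iff)

lemma Pn_linear_lincomb:
  assumes "Pn_linear R ns \<phi>" "Pn_linear R ns \<psi>"
  shows "Pn_linear R ns (\<lambda>v. madd (\<phi> v) (msmult c (\<psi> v)))"
proof (rule Pn_linearI)
  fix a b p q
  assume "a \<in> Pn R ns" "b \<in> Pn R ns"
  then show "madd (\<phi> (madd a b)) (msmult c (\<psi> (madd a b))) p q =
      madd (\<phi> a) (msmult c (\<psi> a)) p q + madd (\<phi> b) (msmult c (\<psi> b)) p q"
    using Pn_linear_add[OF assms(1)] Pn_linear_add[OF assms(2)]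
    by (simp add: madd_def msmult_def algebra_simps)
next
  fix a e p q
  assume "a \<in> Pn R ns"
  then show "madd (\<phi> (msmult e a)) (msmult c (\<psi> (msmult e a))) p q =
      e * madd (\<phi> a) (msmult c (\<psi> a)) p q"
    using Pn_linear_smult[OF assms(1)] Pn_linear_smult[OF assms(2)]
    by (simp add: madd_def msmult_def algebra_simps)
qed

lemma Pn_linear_lact_right: "Pn_linear R ns \<phi> \<Longrightarrow> Pn_linear R ns (\<lambda>v. lact ns a (\<phi> v))"
  by (rule Pn_linearI) (simp_all add: lact_eq Pn_linear_add Pn_linear_smult distrib_left
      sum.distrib sum_distrib_left mult.left_commute)

lemma Pn_linear_ract_left: "Pn_linear R ns \<phi> \<Longrightarrow> Pn_linear R ns (\<lambda>v. ract ns (\<phi> v) b)"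
  by (rule Pn_linearI) (simp_all add: ract_eq Pn_linear_add Pn_linear_smult distrib_right
      sum.distrib sum_distrib_left mult.assoc)

lemma Pn_linear_lact_left: "Pn_linear R ns (\<lambda>v. lact ns v m)"
  by (rule Pn_linearI) (simp_all add: lact_eq madd_def msmult_def distrib_right sum.distrib
      sum_distrib_left mult.assoc)

lemma Pn_linear_ract_right: "Pn_linear R ns (\<lambda>v. ract ns m v)"
  by (rule Pn_linearI) (simp_all add: ract_eq madd_def msmult_def distrib_left sum.distrib
      sum_distrib_left mult.left_commute)

lemma Pn_linear_mult_right:
  assumes "Pn_linear R ns \<phi>" "B \<in> Pn R ns"
  shows "Pn_linear R ns (\<lambda>v. \<phi> (mat_mult (sum_list ns) v B))"
proof -
  have "mat_mult n (madd a b) B = madd (mat_mult n a B) (mat_mult n b B)"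
       "mat_mult n (msmult c a) B = msmult c (mat_mult n a B)" for n a b c
    by (simp_all add: mat_mult_def madd_def msmult_def fun_eq_iff distrib_right sum.distrib
        sum_distrib_left mult.assoc)
  then show ?thesis using assms by (simp add: Pn_linear_def mat_mult_Pn)
qed

lemma Pn_linear_mult_left:
  assumes "Pn_linear R ns \<phi>" "B \<in> Pn R ns"
  shows "Pn_linear R ns (\<lambda>v. \<phi> (mat_mult (sum_list ns) B v))"
proof -
  have "mat_mult n B (madd a b) = madd (mat_mult n B a) (mat_mult n B b)"
       "mat_mult n B (msmult c a) = msmult c (mat_mult n B a)" for n a b c
    by (simp_all add: mat_mult_def madd_def msmult_def fun_eq_iff distrib_left sum.distrib
        sum_distrib_left mult.left_commute)
  then show ?thesis using assms by (simp add: Pn_linear_def mat_mult_Pn)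
qed

lemma Pn_linear_sum3:
  assumes "finite K" "Pn_linear R ns \<phi>1" "\<And>l. l \<in> K \<Longrightarrow> Pn_linear R ns (\<psi> l)" "Pn_linear R ns \<phi>3"
  shows "Pn_linear R ns (\<lambda>v p q. \<phi>1 v p q + (\<Sum>l\<in>K. c l * \<psi> l v p q) + d * \<phi>3 v p q)"
proof (rule Pn_linearI)
  fix a b p q
  assume a: "a \<in> Pn R ns" and b: "b \<in> Pn R ns"
  have "(\<Sum>l\<in>K. c l * \<psi> l (madd a b) p q) = (\<Sum>l\<in>K. c l * \<psi> l a p q) + (\<Sum>l\<in>K. c l * \<psi> l b p q)"
    by (simp add: sum.distrib[symmetric] distrib_left Pn_linear_add[OF assms(3) a b])
  then show "\<phi>1 (madd a b) p q + (\<Sum>l\<in>K. c l * \<psi> l (madd a b) p q) + d * \<phi>3 (madd a b) p q =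
    \<phi>1 a p q + (\<Sum>l\<in>K. c l * \<psi> l a p q) + d * \<phi>3 a p q +
    (\<phi>1 b p q + (\<Sum>l\<in>K. c l * \<psi> l b p q) + d * \<phi>3 b p q)"
    using Pn_linear_add[OF assms(2) a b] Pn_linear_add[OF assms(4) a b] by (simp add: algebra_simps)
next
  fix a e p q
  assume a: "a \<in> Pn R ns"
  have "(\<Sum>l\<in>K. c l * \<psi> l (msmult e a) p q) = e * (\<Sum>l\<in>K. c l * \<psi> l a p q)"
    by (simp add: sum_distrib_left Pn_linear_smult[OF assms(3) a] mult.left_commute)
  then show "\<phi>1 (msmult e a) p q + (\<Sum>l\<in>K. c l * \<psi> l (msmult e a) p q) + d * \<phi>3 (msmult e a) p q =
    e * (\<phi>1 a p q + (\<Sum>l\<in>K. c l * \<psi> l a p q) + d * \<phi>3 a p q)"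
    using Pn_linear_smult[OF assms(2) a] Pn_linear_smult[OF assms(4) a] by (simp add: algebra_simps)
qed

lemma merge_upd_less: "k < l \<Longrightarrow> merge n l (x(k:=v)) = (merge n l x)(k := v)"
  by (auto simp: merge_def fun_eq_iff)

lemma merge_upd_same: "merge n l (x(l:=v)) = (merge n l x)(l := mat_mult n v (x (Suc l)))"
  by (auto simp: merge_def fun_eq_iff)

lemma merge_upd_Suc: "merge n l (x(Suc l:=v)) = (merge n l x)(l := mat_mult n (x l) v)"
  by (auto simp: merge_def fun_eq_iff)

lemma merge_upd_greater: "Suc l < k \<Longrightarrow> merge n l (x(k:=v)) = (merge n l x)(k - 1 := v)"
  by (auto simp: merge_def fun_eq_iff)

lemma tuple_tl_upd_0: "tuple_tl (x(0:=v)) = tuple_tl x"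
  by (simp add: tuple_tl_def fun_eq_iff)

lemma tuple_tl_upd_Suc: "tuple_tl (x(Suc k:=v)) = (tuple_tl x)(k := v)"
  by (simp add: tuple_tl_def fun_eq_iff)

lemma tuple_take_upd_less: "k < i \<Longrightarrow> tuple_take i (x(k:=v)) = (tuple_take i x)(k := v)"
  by (auto simp: tuple_take_def fun_eq_iff)

lemma tuple_take_upd_same: "tuple_take i (x(i:=v)) = tuple_take i x"
  by (auto simp: tuple_take_def fun_eq_iff)

lemma Pn_linear_cochain_merge:
  assumes f: "cochain R ns i f" and x: "x \<in> tuples R ns (Suc i)" and k: "k < Suc i" and l: "l < i"
  shows "Pn_linear R ns (\<lambda>v. f (merge (sum_list ns) l (x(k:=v))))"
proof -
  have y: "merge (sum_list ns) l x \<in> tuples R ns i" using merge_tuples[OF x l] .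
  consider "k < l" | "k = l" | "k = Suc l" | "Suc l < k" by linarith
  then show ?thesis
  proof cases
    case 1
    then show ?thesis using cochain_linear[OF f y, of k] l by (simp add: merge_upd_less)
  next
    case 2
    then show ?thesis
      using Pn_linear_mult_right[OF cochain_linear[OF f y l] tuples_Pn[OF x]]
      by (simp add: merge_upd_same)
  next
    case 3
    then show ?thesis
      using Pn_linear_mult_left[OF cochain_linear[OF f y l] tuples_Pn[OF x]]
      by (simp add: merge_upd_Suc)
  next
    case 4
    then show ?thesis using cochain_linear[OF f y, of "k - 1"] k by (simp add: merge_upd_greater)
  qed
qed

lemma Pn_linear_hoch_d:
  assumes f: "cochain R ns i f" and x: "x \<in> tuples R ns (Suc i)" and k: "k < Suc i"
  shows "Pn_linear R ns (\<lambda>v. hoch_d ns i f (x(k:=v)))"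
proof -
  define A where "A = (\<lambda>v. lact ns ((x(k:=v)) 0) (f (tuple_tl (x(k:=v)))))"
  define B where "B = (\<lambda>l v. f (merge (sum_list ns) l (x(k:=v))))"
  define C where "C = (\<lambda>v. ract ns (f (tuple_take i (x(k:=v)))) ((x(k:=v)) i))"
  have eq: "(\<lambda>v. hoch_d ns i f (x(k:=v))) =
     (\<lambda>v p q. A v p q + (\<Sum>l\<in>{..<i}. (-1) ^ Suc l * B l v p q) + (-1) ^ Suc i * C v p q)"
    unfolding A_def B_def C_def by (simp add: hoch_d_eq)
  have A: "Pn_linear R ns A"
  proof (cases k)
    case 0
    then show ?thesis unfolding A_def by (simp add: tuple_tl_upd_0 Pn_linear_lact_left)
  next
    case (Suc k')
    have "Pn_linear R ns (\<lambda>v. f ((tuple_tl x)(k' := v)))"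
      using cochain_linear[OF f tuple_tl_tuples[OF x]] Suc k by simp
    then show ?thesis unfolding A_def using Suc by (simp add: tuple_tl_upd_Suc Pn_linear_lact_right)
  qed
  have B: "Pn_linear R ns (B l)" if "l \<in> {..<i}" for l
    using Pn_linear_cochain_merge[OF f x k] that unfolding B_def by simp
  have C: "Pn_linear R ns C"
  proof (cases "k = i")
    case True
    then show ?thesis unfolding C_def by (simp add: tuple_take_upd_same Pn_linear_ract_right)
  next
    case False
    then have "k < i" using k by simp
    then show ?thesis unfolding C_def
      using Pn_linear_ract_left[OF cochain_linear[OF f tuple_take_tuples[OF x, of i] \<open>k < i\<close>]]
      by (simp add: tuple_take_upd_less)
  qed
  show ?thesis unfolding eq by (rule Pn_linear_sum3[OF _ A B C]) auto
qed

lemma hoch_d_Qn: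
  assumes "\<forall>y\<in>tuples R ns i. g y \<in> Qn R ns" and "x \<in> tuples R ns (Suc i)"
  shows "hoch_d ns i g x \<in> Qn R ns"
  using assms merge_tuples[OF assms(2)] by (auto simp: Qn_iff hoch_d_apply lact_eq ract_eq)

lemma cochain_hoch_d: "cochain R ns i f \<Longrightarrow> cochain R ns (Suc i) (hoch_d ns i f)"
  unfolding cochain_iff[of R ns "Suc i"]
  using hoch_d_Qn Pn_linear_hoch_d by (metis cochain_Qn)

lemma cochain_zero: "cochain R ns i (\<lambda>x. mzero)"
  unfolding cochain_iff by (auto simp: Qn_iff Pn_linear_def madd_def msmult_def mzero_def)

lemma cochain_lincomb:
  "cochain R ns i F \<Longrightarrow> cochain R ns i G \<Longrightarrow> cochain R ns i (\<lambda>x. madd (F x) (msmult c (G x)))"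
  unfolding cochain_iff by (auto intro!: madd_Qn msmult_Qn Pn_linear_lincomb)

lemma hoch_d_zero: "hoch_d ns i (\<lambda>x. mzero) y = mzero"
  by (intro ext) (simp add: hoch_d_apply lact_eq ract_eq mzero_def)

lemma hoch_d_lincomb: "hoch_d ns i (\<lambda>x. madd (F x) (msmult c (G x))) y =
   madd (hoch_d ns i F y) (msmult c (hoch_d ns i G y))"
proof (intro ext)
  fix p q
  let ?M = "\<lambda>k. merge (sum_list ns) k y"
  have l: "lact ns a (\<lambda>i j. M i j + c * N i j) p q = lact ns a M p q + c * lact ns a N p q" for a M N
    by (simp add: lact_eq distrib_left sum.distrib sum_distrib_left mult.left_commute)
  have r: "ract ns (\<lambda>i j. M i j + c * N i j) b p q = ract ns M b p q + c * ract ns N b p q" for b M N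
    by (simp add: ract_eq distrib_right sum.distrib sum_distrib_left mult.assoc)
  have s: "(\<Sum>k<i. (-1) ^ Suc k * (F (?M k) p q + c * G (?M k) p q)) =
      (\<Sum>k<i. (-1) ^ Suc k * F (?M k) p q) + c * (\<Sum>k<i. (-1) ^ Suc k * G (?M k) p q)"
    unfolding sum_distrib_left sum.distrib[symmetric] by (rule sum.cong) (simp_all add: algebra_simps)
  show "hoch_d ns i (\<lambda>x. madd (F x) (msmult c (G x))) y p q =
      madd (hoch_d ns i F y) (msmult c (hoch_d ns i G y)) p q"
    unfolding hoch_d_apply madd_def msmult_def l r s by (simp add: algebra_simps)
qed

section \<open>The Hochschild differential squares to zero\<close>

lemma lact_sum3: "finite K \<Longrightarrow>
   lact ns a (\<lambda>p q. X p q + (\<Sum>k\<in>K. c k * Y k p q) + d * Z p q) p q =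
   lact ns a X p q + (\<Sum>k\<in>K. c k * lact ns a (Y k) p q) + d * lact ns a Z p q"
  by (simp add: lact_eq distrib_left sum.distrib sum_distrib_left mult.left_commute sum.swap[of _ K])

lemma ract_sum3: "finite K \<Longrightarrow>
   ract ns (\<lambda>p q. X p q + (\<Sum>k\<in>K. c k * Y k p q) + d * Z p q) b p q =
   ract ns X b p q + (\<Sum>k\<in>K. c k * ract ns (Y k) b p q) + d * ract ns Z b p q"
  by (simp add: ract_eq distrib_right sum.distrib sum_distrib_left sum_distrib_right mult.assoc
      sum.swap[of _ K])

lemma lact_hoch_d: "lact ns a (hoch_d ns i g y) p q =
     lact ns a (lact ns (y 0) (g (tuple_tl y))) p q
   + (\<Sum>k<i. (-1) ^ Suc k * lact ns a (g (merge (sum_list ns) k y)) p q)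
   + (-1) ^ Suc i * lact ns a (ract ns (g (tuple_take i y)) (y i)) p q"
  unfolding hoch_d_eq by (rule lact_sum3) simp

lemma ract_hoch_d: "ract ns (hoch_d ns i g y) b p q =
     ract ns (lact ns (y 0) (g (tuple_tl y))) b p q
   + (\<Sum>k<i. (-1) ^ Suc k * ract ns (g (merge (sum_list ns) k y)) b p q)
   + (-1) ^ Suc i * ract ns (ract ns (g (tuple_take i y)) (y i)) b p q"
  unfolding hoch_d_eq by (rule ract_sum3) simp

lemma merge_merge: "l < k \<Longrightarrow> merge n l (merge n k x) = merge n (k - 1) (merge n l x)"
  by (auto simp: merge_def fun_eq_iff mat_mult_assoc)

lemma tuple_tl_merge_0: "tuple_tl (merge n 0 x) = tuple_tl (tuple_tl x)"
  by (simp add: merge_def tuple_tl_def fun_eq_iff)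

lemma tuple_tl_merge_Suc: "tuple_tl (merge n (Suc k) x) = merge n k (tuple_tl x)"
  by (auto simp: merge_def tuple_tl_def fun_eq_iff)

lemma tuple_take_merge: "k < i \<Longrightarrow> tuple_take i (merge n k x) = merge n k (tuple_take (Suc i) x)"
  by (auto simp: merge_def tuple_take_def fun_eq_iff)

lemma tuple_take_merge_same: "tuple_take i (merge n i x) = tuple_take i x"
  by (auto simp: merge_def tuple_take_def fun_eq_iff)

lemma tuple_take_tuple_take: "tuple_take i (tuple_take (Suc i) x) = tuple_take i x"
  by (auto simp: tuple_take_def fun_eq_iff)

lemma tuple_tl_tuple_take: "tuple_tl (tuple_take (Suc i) x) = tuple_take i (tuple_tl x)"
  by (auto simp: tuple_tl_def tuple_take_def fun_eq_iff)

lemma sum_sum_antisym_zero: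
  fixes T :: "nat \<Rightarrow> nat \<Rightarrow> 'a::ab_group_add"
  assumes anti: "\<And>k l. l < k \<Longrightarrow> k \<le> i \<Longrightarrow> T l (k - 1) = - T k l"
  shows "(\<Sum>k<Suc i. \<Sum>l<i. T k l) = 0"
proof -
  define Lo where "Lo = {(k, l). k < Suc i \<and> l < i \<and> l < k}"
  define Up where "Up = {(k, l). k < Suc i \<and> l < i \<and> k \<le> l}"
  have fin: "finite Lo" "finite Up"
    unfolding Lo_def Up_def by (auto intro: finite_subset[of _ "{..<Suc i} \<times> {..<i}"])
  have "{..<Suc i} \<times> {..<i} = Lo \<union> Up" "Lo \<inter> Up = {}" unfolding Lo_def Up_def by auto
  then have "(\<Sum>k<Suc i. \<Sum>l<i. T k l) = (\<Sum>(k,l)\<in>Lo. T k l) + (\<Sum>(k,l)\<in>Up. T k l)"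
    by (simp add: sum.cartesian_product sum.union_disjoint[OF fin])
  also have "(\<Sum>(k,l)\<in>Up. T k l) = (\<Sum>(k,l)\<in>Lo. T l (k - 1))"
  proof -
    have "bij_betw (\<lambda>(k,l). (l, k - 1)) Lo Up"
      by (rule bij_betw_byWitness[where f' = "\<lambda>(k,l). (Suc l, k)"]) (auto simp: Lo_def Up_def)
    from sum.reindex_bij_betw[OF this, of "\<lambda>(k,l). T k l"] show ?thesis
      by (simp add: case_prod_beta)
  qed
  also have "\<dots> = (\<Sum>(k,l)\<in>Lo. - T k l)"
    using anti by (intro sum.cong) (auto simp: Lo_def)
  finally show ?thesis by (simp add: sum_negf case_prod_beta)
qed

lemma double_merge_terms_cancel:
  fixes g :: "(nat \<Rightarrow> 'r::comm_ring_1 mat) \<Rightarrow> 'r mat"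
  shows "(\<Sum>k<Suc i. (-1) ^ Suc k * (\<Sum>l<i. (-1) ^ Suc l * g (merge n l (merge n k x)) p q)) = 0"
proof -
  have "(\<Sum>k<Suc i. (-1) ^ Suc k * (\<Sum>l<i. (-1) ^ Suc l * g (merge n l (merge n k x)) p q)) =
      (\<Sum>k<Suc i. \<Sum>l<i. (-1) ^ Suc k * ((-1) ^ Suc l * g (merge n l (merge n k x)) p q))"
    by (simp only: sum_distrib_left)
  also have "\<dots> = 0"
  proof (rule sum_sum_antisym_zero)
    fix k l :: nat
    assume lk: "l < k" "k \<le> i"
    then obtain k' where "k = Suc k'" by (cases k) auto
    then show "(-1) ^ Suc l * ((-1) ^ Suc (k - 1) * g (merge n (k - 1) (merge n l x)) p q) =
        - ((-1) ^ Suc k * ((-1) ^ Suc l * g (merge n l (merge n k x)) p q))"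
      using merge_merge[OF lk(1), of n x] by (simp add: algebra_simps)
  qed
  finally show ?thesis .
qed

lemma hoch_d_hoch_d:
  assumes x: "x \<in> tuples R ns (Suc (Suc i))"
  shows "hoch_d ns (Suc i) (hoch_d ns i g) x = mzero"
proof (intro ext)
  fix p q
  let ?n = "sum_list ns"
  have x0: "x 0 \<in> Pn R ns" and xi: "x (Suc i) \<in> Pn R ns" using tuples_Pn[OF x] by auto
  define a1 where "a1 = lact ns (x 0) (lact ns (x 1) (g (tuple_tl (tuple_tl x)))) p q"
  define a2 where "a2 k = lact ns (x 0) (g (merge ?n k (tuple_tl x))) p q" for k
  define a3 where "a3 = lact ns (x 0) (ract ns (g (tuple_take i (tuple_tl x))) (x (Suc i))) p q"
  define b1 where "b1 k = lact ns (merge ?n k x 0) (g (tuple_tl (merge ?n k x))) p q" for k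
  define b3 where "b3 k = ract ns (g (tuple_take i (merge ?n k x))) (merge ?n k x i) p q" for k
  define c2 where "c2 k = ract ns (g (merge ?n k (tuple_take (Suc i) x))) (x (Suc i)) p q" for k
  define c3 where "c3 = ract ns (g (tuple_take i x)) (mat_mult ?n (x i) (x (Suc i))) p q"
  define A2 where "A2 = (\<Sum>k<i. (-1) ^ Suc k * a2 k)"
  define C2 where "C2 = (\<Sum>k<i. (-1) ^ Suc k * c2 k)"
  have first: "lact ns (x 0) (hoch_d ns i g (tuple_tl x)) p q = a1 + A2 + (-1) ^ Suc i * a3"
    unfolding lact_hoch_d a1_def A2_def a2_def a3_def by (simp add: tuple_tl_def)
  have middle: "hoch_d ns i g (merge ?n k x) p q =
      b1 k + (\<Sum>l<i. (-1) ^ Suc l * g (merge ?n l (merge ?n k x)) p q) + (-1) ^ Suc i * b3 k" for k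
    unfolding hoch_d_apply b1_def b3_def by simp
  have last: "ract ns (hoch_d ns i g (tuple_take (Suc i) x)) (x (Suc i)) p q =
      a3 + C2 + (-1) ^ Suc i * c3"
    unfolding ract_hoch_d C2_def c2_def a3_def c3_def
    by (simp add: tuple_tl_tuple_take tuple_take_tuple_take lact_ract[OF x0 xi] ract_ract[OF xi])
      (simp add: tuple_take_def)
  have "b1 0 = a1" "b1 (Suc k) = a2 k" for k
    unfolding a1_def a2_def b1_def
    by (simp_all add: lact_lact[OF x0] tuple_tl_merge_0 tuple_tl_merge_Suc, simp_all add: merge_def)
  then have sum_b1: "(\<Sum>k<Suc i. (-1) ^ Suc k * b1 k) = - a1 - A2"
    unfolding sum.lessThan_Suc_shift A2_def by (simp add: sum_negf)
  have "k < i \<Longrightarrow> b3 k = c2 k" "b3 i = c3" for k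
    unfolding b3_def c2_def c3_def
    by (simp_all add: tuple_take_merge tuple_take_merge_same, simp_all add: merge_def)
  then have sum_b3: "(\<Sum>k<Suc i. (-1) ^ Suc k * ((-1) ^ Suc i * b3 k)) =
      (-1) ^ Suc i * C2 + (-1) ^ Suc i * ((-1) ^ Suc i * c3)"
    unfolding sum.lessThan_Suc C2_def by (simp add: sum_distrib_left algebra_simps)
  have "hoch_d ns (Suc i) (hoch_d ns i g) x p q =
     lact ns (x 0) (hoch_d ns i g (tuple_tl x)) p q
     + (\<Sum>k<Suc i. (-1) ^ Suc k * b1 k)
     + (\<Sum>k<Suc i. (-1) ^ Suc k * (\<Sum>l<i. (-1) ^ Suc l * g (merge ?n l (merge ?n k x)) p q))
     + (\<Sum>k<Suc i. (-1) ^ Suc k * ((-1) ^ Suc i * b3 k))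
     + (-1) ^ Suc (Suc i) * ract ns (hoch_d ns i g (tuple_take (Suc i) x)) (x (Suc i)) p q"
    by (simp only: hoch_d_apply[of ns "Suc i"] middle distrib_left sum.distrib add.assoc)
  then show "hoch_d ns (Suc i) (hoch_d ns i g) x p q = mzero p q"
    unfolding first last sum_b1 sum_b3 double_merge_terms_cancel
    by (simp add: mzero_def algebra_simps)
qed

definition unit_mat :: "nat \<Rightarrow> nat \<Rightarrow> 'r::comm_ring_1 mat" where
  "unit_mat a b = (\<lambda>i j. if i = a \<and> j = b then 1 else 0)"

definition msum :: "'i set \<Rightarrow> ('i \<Rightarrow> 'r::comm_ring_1 mat) \<Rightarrow> 'r mat" where
  "msum S v = (\<lambda>i j. \<Sum>d\<in>S. v d i j)"

lemma unit_mat_Pn: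
  assumes "a < sum_list ns" "b < sum_list ns" "\<not> forced_zero ns a b"
  shows "unit_mat a b \<in> Pn R ns"
  using assms by (auto simp: Pn_iff unit_mat_def)

lemma not_forced_zero_left_blocks:
  assumes "c < psum ns t" "psum ns (t - 1) \<le> z" "0 < t"
  shows "\<not> forced_zero ns c z"
proof
  assume "forced_zero ns c z"
  then obtain t' where t': "psum ns t' \<le> c" "z < psum ns t'"
    using forced_zero_iff by blast
  then have "t' < t" using assms(1) psum_mono[of t t' ns] by (metis order.strict_trans2 not_le)
  then have "t' \<le> t - 1" by simp
  then show False using t' assms psum_mono[of t' "t - 1" ns] by simp
qed

lemma unit_mat_last_column_Pn:
  assumes pos: "\<forall>m\<in>set ns. 0 < m" and t: "0 < t" "t < length ns" and c: "c < psum ns t"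
  shows "unit_mat c (psum ns t - 1) \<in> Pn R ns"
proof (rule unit_mat_Pn)
  have "psum ns (t - 1) < psum ns t"
    using psum_less_Suc[OF pos, of "t - 1"] t by simp
  then show "\<not> forced_zero ns c (psum ns t - 1)"
    using not_forced_zero_left_blocks[OF c _ t(1)] by simp
  show "c < sum_list ns" "psum ns t - 1 < sum_list ns"
    using c psum_le_sum_list[of ns t] by auto
qed

lemma lact_unit_mat: "b < sum_list ns \<Longrightarrow>
   lact ns (unit_mat a b) m p q = (if forced_zero ns p q \<and> p = a then m b q else 0)"
  by (auto simp: lact_eq unit_mat_def if_distrib[of "\<lambda>x. x * _"] cong: if_cong)

lemma ract_unit_mat: "c < sum_list ns \<Longrightarrow>
   ract ns m (unit_mat c z) p q = (if forced_zero ns p q \<and> q = z then m p c else 0)"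
  by (auto simp: ract_eq unit_mat_def if_distrib[of "\<lambda>x. _ * x"] cong: if_cong)

lemma mat_mult_unit_mat_expand:
  assumes a: "a \<in> Pn R ns" and c: "c < psum ns t"
  shows "mat_mult (sum_list ns) a (unit_mat c z) = msum {..<psum ns t} (\<lambda>l. msmult (a l c) (unit_mat l z))"
proof (intro ext)
  fix p q
  have "a p c = 0" if "psum ns t \<le> p"
    using forced_zero_below[OF that _ c] Pn_forced_zero[OF a] Pn_outside[OF a]
    by (cases "p < sum_list ns") auto
  moreover have "c < sum_list ns" using c psum_le_sum_list[of ns t] by simp
  ultimately have "mat_mult (sum_list ns) a (unit_mat c z) p q = (if q = z then a p c else 0)"
      "msum {..<psum ns t} (\<lambda>l. msmult (a l c) (unit_mat l z)) p q = (if q = z then a p c else 0)"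
    by (auto simp: mat_mult_def msum_def msmult_def unit_mat_def if_distrib[of "\<lambda>x. _ * x"] cong: if_cong)
  then show "mat_mult (sum_list ns) a (unit_mat c z) p q = msum {..<psum ns t} (\<lambda>l. msmult (a l c) (unit_mat l z)) p q"
    by simp
qed

lemma Pn_linear_msum:
  assumes \<phi>: "Pn_linear R ns \<phi>" and "finite S" and "\<And>d. d \<in> S \<Longrightarrow> v d \<in> Pn R ns"
  shows "\<phi> (msum S (\<lambda>d. msmult (w d) (v d))) = msum S (\<lambda>d. msmult (w d) (\<phi> (v d)))"
  using assms(2,3)
proof (induction S rule: finite_induct)
  case empty
  then show ?case using Pn_linear_zero[OF \<phi>] by (simp add: msum_def mzero_def)
next
  case (insert d S)
  have msum_insert: "msum (insert d S) u = madd (u d) (msum S u)" for u :: "_ \<Rightarrow> 'a mat"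
    using insert(1,2) by (simp add: msum_def madd_def)
  have vd: "msmult (w d) (v d) \<in> Pn R ns" using insert(4) msmult_Pn by blast
  have "msum S (\<lambda>d. msmult (w d) (v d)) \<in> Pn R ns"
    using insert(4) by (auto simp: Pn_iff msum_def msmult_def intro!: sum.neutral)
  then have "\<phi> (msum (insert d S) (\<lambda>d. msmult (w d) (v d))) =
      madd (\<phi> (msmult (w d) (v d))) (\<phi> (msum S (\<lambda>d. msmult (w d) (v d))))"
    using \<phi> vd by (simp add: msum_insert Pn_linear_def)
  also have "\<dots> = msum (insert d S) (\<lambda>d. msmult (w d) (\<phi> (v d)))"
    using \<phi> insert by (simp add: msum_insert Pn_linear_def)
  finally show ?case .
qed

definition cocycle ::
  "'r itself \<Rightarrow> nat list \<Rightarrow> nat \<Rightarrow> ((nat \<Rightarrow> 'r::comm_ring_1 mat) \<Rightarrow> 'r mat) \<Rightarrow> bool" where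
  "cocycle R ns i f \<longleftrightarrow>
     cochain R ns i f \<and> (\<forall>x\<in>tuples R ns (Suc i). hoch_d ns i f x = mzero)"

definition coboundary ::
  "'r itself \<Rightarrow> nat list \<Rightarrow> nat \<Rightarrow> ((nat \<Rightarrow> 'r::comm_ring_1 mat) \<Rightarrow> 'r mat) \<Rightarrow> bool" where
  "coboundary R ns j f \<longleftrightarrow>
     (\<exists>g. cochain R ns j g \<and> (\<forall>x\<in>tuples R ns (Suc j). f x = hoch_d ns j g x))"

lemma cocycle_hoch_d_eq_zero:
  "cocycle R ns i f \<Longrightarrow> x \<in> tuples R ns (Suc i) \<Longrightarrow> hoch_d ns i f x p q = 0"
  by (simp add: cocycle_def mzero_def)

lemma cocycle_degree_0:
  assumes f: "cocycle R ns 0 f" and x: "x \<in> tuples R ns 0"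
  shows "f x = mzero"
proof (intro ext)
  fix r c
  show "f x r c = mzero r c"
  proof (cases "forced_zero ns r c")
    case False
    then show ?thesis
      using cochain_Qn[of R ns 0 f x] f x by (simp add: cocycle_def Qn_iff mzero_def)
  next
    case True
    then have r: "r < sum_list ns" and "c \<noteq> r"
      using forced_zero_bounded not_forced_zero_diag by blast+
    define y where "y = x(0 := unit_mat r r)"
    have "y \<in> tuples R ns (Suc 0)"
      using x r unit_mat_Pn[OF r r not_forced_zero_diag] by (auto simp: y_def tuples_iff)
    moreover have "tuple_tl y = x" "tuple_take 0 y = x"
      using x by (auto simp: y_def tuples_iff tuple_tl_def tuple_take_def)
    \<comment> \<open>entry (r,c) of (df)(E_rr) = E_rr f() - f() E_rr is f() r c, as c \<noteq> r\<close>
    ultimately show ?thesis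
      using cocycle_hoch_d_eq_zero[OF f, of y r c] True r \<open>c \<noteq> r\<close>
      by (simp add: hoch_d_apply y_def lact_unit_mat ract_unit_mat mzero_def)
  qed
qed

section \<open>Contracting a row block\<close>

definition row_contraction ::
  "nat list \<Rightarrow> nat \<Rightarrow> nat \<Rightarrow> ((nat \<Rightarrow> 'r::comm_ring_1 mat) \<Rightarrow> 'r mat) \<Rightarrow> (nat \<Rightarrow> 'r mat) \<Rightarrow> 'r mat" where
  "row_contraction ns t j f x = (\<lambda>r c.
     if psum ns t \<le> r \<and> r < psum ns (Suc t) \<and> c < psum ns t
     then (-1) ^ Suc j * f (x(j := unit_mat c (psum ns t - 1))) r (psum ns t - 1) else 0)"

lemma row_contraction_Qn:
  "t < length ns \<Longrightarrow> row_contraction ns t j f x \<in> Qn R ns"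
  unfolding Qn_iff row_contraction_def using forced_zero_in_block by auto

lemma cochain_row_contraction:
  assumes pos: "\<forall>m\<in>set ns. 0 < m" and t: "0 < t" "t < length ns"
    and f: "cochain R ns (Suc j) f"
  shows "cochain R ns j (row_contraction ns t j f)"
  unfolding cochain_iff
proof (intro conjI ballI allI impI)
  fix x
  show "row_contraction ns t j f x \<in> Qn R ns" using row_contraction_Qn t(2) .
next
  fix x k
  assume x: "x \<in> tuples R ns j" and k: "k < j"
  let ?z = "psum ns t - 1"
  have L: "Pn_linear R ns (\<lambda>v. f ((x(j := unit_mat c ?z))(k := v)))" if "c < psum ns t" for c
  proof -
    have "x(j := unit_mat c ?z) \<in> tuples R ns (Suc j)"
      using x unit_mat_last_column_Pn[OF pos t that] by (auto simp: tuples_iff)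
    then show ?thesis using cochain_linear[OF f] k by simp
  qed
  have upd: "(x(k := v))(j := e) = (x(j := e))(k := v)" for v e using k by auto
  show "Pn_linear R ns (\<lambda>v. row_contraction ns t j f (x(k := v)))"
  proof (rule Pn_linearI)
    fix a b p q
    assume "a \<in> Pn R ns" "b \<in> Pn R ns"
    from Pn_linear_add[OF L this, of q p ?z]
    show "row_contraction ns t j f (x(k := madd a b)) p q =
        row_contraction ns t j f (x(k := a)) p q + row_contraction ns t j f (x(k := b)) p q"
      by (simp add: row_contraction_def upd algebra_simps)
  next
    fix a e p q
    assume "a \<in> Pn R ns"
    from Pn_linear_smult[OF L this, of q e p ?z]
    show "row_contraction ns t j f (x(k := msmult e a)) p q =
        e * row_contraction ns t j f (x(k := a)) p q"
      by (simp add: row_contraction_def upd algebra_simps)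
  qed
qed

lemma hoch_d_row_contraction_later_rows:
  assumes x: "x \<in> tuples R ns (Suc j)" and r: "psum ns (Suc t) \<le> r"
  shows "hoch_d ns j (row_contraction ns t j f) x r c = 0"
proof -
  have "x 0 r l * row_contraction ns t j f (tuple_tl x) l c = 0" if "l < sum_list ns" for l
  proof (cases "l < psum ns (Suc t)")
    case True
    have "x 0 r l = 0"
      using forced_zero_below[OF r _ True] Pn_forced_zero[OF tuples_Pn[OF x]]
        Pn_outside[OF tuples_Pn[OF x]] by (cases "r < sum_list ns") auto
    then show ?thesis by simp
  qed (simp add: row_contraction_def)
  then show ?thesis using r by (simp add: hoch_d_apply lact_eq ract_eq row_contraction_def)
qed

context
  fixes R :: "'r::comm_ring_1 itself" and ns :: "nat list" and t j r c :: nat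
    and f :: "(nat \<Rightarrow> 'r mat) \<Rightarrow> 'r mat" and x :: "nat \<Rightarrow> 'r mat"
  assumes pos: "\<forall>m\<in>set ns. 0 < m" and t: "0 < t" "t < length ns"
    and f: "cocycle R ns (Suc j) f"
    and vanish: "\<forall>y\<in>tuples R ns (Suc j). \<forall>r' c'. psum ns (Suc t) \<le> r' \<longrightarrow> f y r' c' = 0"
    and x: "x \<in> tuples R ns (Suc j)"
    and r: "psum ns t \<le> r" "r < psum ns (Suc t)" and c: "c < psum ns t"
begin

abbreviation (input) last_col :: nat where
  "last_col \<equiv> psum ns t - 1"

abbreviation (input) x_ext :: "nat \<Rightarrow> 'r mat" where
  "x_ext \<equiv> x(Suc j := unit_mat c last_col)"

lemma last_col_bounds: "psum ns (t - 1) \<le> last_col" "last_col < psum ns t"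
proof -
  have "psum ns (t - 1) < psum ns t" using psum_less_Suc[OF pos, of "t - 1"] t by simp
  then show "psum ns (t - 1) \<le> last_col" "last_col < psum ns t" by simp_all
qed

lemma forced_zero_row_iff: "forced_zero ns r q \<longleftrightarrow> q < psum ns t"
  using forced_zero_in_block[OF t(2) r] .

lemma x_ext_tuples: "x_ext \<in> tuples R ns (Suc (Suc j))"
  using x unit_mat_last_column_Pn[OF pos t c] by (auto simp: tuples_iff)

text \<open>Right multiplication by E_{cz} moves column c to column z, so in entry (r,z) the
  last term of the cocycle identity at x_ext is f x r c.\<close>

lemma cocycle_at_x_ext:
  "lact ns (x 0) (f (tuple_tl x_ext)) r last_col
   + (\<Sum>k<Suc j. (-1) ^ Suc k * f (merge (sum_list ns) k x_ext) r last_col)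
   + (-1) ^ Suc (Suc j) * f x r c = 0"
proof -
  have "tuple_take (Suc j) x_ext = x" using x by (auto simp: tuples_iff tuple_take_def)
  moreover have "ract ns (f x) (unit_mat c last_col) r last_col = f x r c"
    using c psum_le_sum_list[of ns t] last_col_bounds by (simp add: ract_unit_mat forced_zero_row_iff)
  ultimately show ?thesis
    using cocycle_hoch_d_eq_zero[OF f x_ext_tuples, of r last_col] by (simp add: hoch_d_apply)
qed

lemma contraction_first_term:
  "lact ns (x 0) (row_contraction ns t j f (tuple_tl x)) r c =
   (-1) ^ Suc j * lact ns (x 0) (f (tuple_tl x_ext)) r last_col"
proof -
  have "x 0 r l * row_contraction ns t j f (tuple_tl x) l c =
      (-1) ^ Suc j * (x 0 r l * f (tuple_tl x_ext) l last_col)" for l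
  proof -
    consider "l < psum ns t" | "psum ns t \<le> l" "l < psum ns (Suc t)" | "psum ns (Suc t) \<le> l"
      by linarith
    then show ?thesis
    proof cases
      case 1
      then have "x 0 r l = 0"
        using Pn_forced_zero[OF tuples_Pn[OF x]] forced_zero_row_iff by blast
      then show ?thesis by simp
    next
      case 2
      then show ?thesis using c by (simp add: row_contraction_def tuple_tl_upd_Suc)
    next
      case 3
      then have "f (tuple_tl x_ext) l last_col = 0"
        using vanish tuple_tl_tuples[OF x_ext_tuples] by blast
      then show ?thesis using 3 by (simp add: row_contraction_def)
    qed
  qed
  then show ?thesis
    using c last_col_bounds by (simp add: lact_eq forced_zero_row_iff sum_distrib_left)
qed

lemma contraction_middle_term:
  "k < j \<Longrightarrow> row_contraction ns t j f (merge (sum_list ns) k x) r c =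
   (-1) ^ Suc j * f (merge (sum_list ns) k x_ext) r last_col"
  using r c by (simp add: row_contraction_def merge_upd_greater)

lemma contraction_last_term:
  "ract ns (row_contraction ns t j f (tuple_take j x)) (x j) r c =
   (-1) ^ Suc j * f (merge (sum_list ns) j x_ext) r last_col"
proof -
  let ?n = "sum_list ns" and ?y = "\<lambda>l. (tuple_take j x)(j := unit_mat l last_col)"
    and ?E = "msum {..<psum ns t} (\<lambda>l. msmult (x j l c) (unit_mat l last_col))"
  have take: "tuple_take j x \<in> tuples R ns (Suc j)"
    using x by (auto simp: tuples_iff tuple_take_def mzero_Pn)
  have "merge ?n j x_ext = (tuple_take j x)(j := mat_mult ?n (x j) (unit_mat c last_col))"
    using x by (auto simp: merge_def tuple_take_def tuples_iff fun_eq_iff)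
  also have "\<dots> = (tuple_take j x)(j := ?E)"
    by (simp add: mat_mult_unit_mat_expand[OF tuples_Pn[OF x] c])
  finally have merge_eq: "merge ?n j x_ext = (tuple_take j x)(j := ?E)" .
  have "f (merge ?n j x_ext) =
      msum {..<psum ns t} (\<lambda>l. msmult (x j l c) (f (?y l)))"
  proof -
    have lin: "Pn_linear R ns (\<lambda>v. f ((tuple_take j x)(j := v)))"
      using cochain_linear[OF _ take, of f j] f by (simp add: cocycle_def)
    have unit: "\<And>l. l \<in> {..<psum ns t} \<Longrightarrow> unit_mat l last_col \<in> Pn R ns"
      using unit_mat_last_column_Pn[OF pos t] by simp
    show ?thesis
      using Pn_linear_msum[OF lin finite_lessThan unit, where w = "\<lambda>l. x j l c"] merge_eq by simp
  qed
  then have "f (merge ?n j x_ext) r last_col = (\<Sum>l<psum ns t. x j l c * f (?y l) r last_col)"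
    by (simp add: msum_def msmult_def)
  moreover have "ract ns (row_contraction ns t j f (tuple_take j x)) (x j) r c =
      (\<Sum>l<psum ns t. (-1) ^ Suc j * f (?y l) r last_col * x j l c)"
  proof -
    have "(\<Sum>l<?n. row_contraction ns t j f (tuple_take j x) r l * x j l c) =
        (\<Sum>l<psum ns t. (-1) ^ Suc j * f (?y l) r last_col * x j l c)"
      by (rule sum.mono_neutral_cong_right)
        (use r psum_le_sum_list[of ns t] in \<open>auto simp: row_contraction_def\<close>)
    then show ?thesis using c by (simp add: ract_eq forced_zero_row_iff)
  qed
  ultimately show ?thesis by (simp add: sum_distrib_left algebra_simps)
qed

lemma hoch_d_row_contraction_in_block:
  "hoch_d ns j (row_contraction ns t j f) x r c = f x r c"
proof -
  let ?L = "lact ns (x 0) (f (tuple_tl x_ext)) r last_col"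
    and ?M = "\<lambda>k. f (merge (sum_list ns) k x_ext) r last_col"
  define s :: 'r where "s = (-1) ^ Suc j"
  have "hoch_d ns j (row_contraction ns t j f) x r c =
      s * ?L + (\<Sum>k<j. (-1) ^ Suc k * (s * ?M k)) + s * (s * ?M j)"
    by (simp add: hoch_d_apply contraction_first_term contraction_middle_term
        contraction_last_term s_def)
  also have "\<dots> = s * (?L + (\<Sum>k<Suc j. (-1) ^ Suc k * ?M k))"
    by (simp add: sum_distrib_left algebra_simps s_def)
  also have "\<dots> = s * s * f x r c"
    using cocycle_at_x_ext by (simp add: s_def eq_neg_iff_add_eq_0[symmetric])
  finally show ?thesis by (simp add: s_def power_mult_distrib[symmetric])
qed

end

lemma hoch_d_row_contraction:
  assumes pos: "\<forall>m\<in>set ns. 0 < m" and t: "0 < t" "t < length ns"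
    and f: "cocycle R ns (Suc j) f"
    and vanish: "\<forall>y\<in>tuples R ns (Suc j). \<forall>r' c'. psum ns (Suc t) \<le> r' \<longrightarrow> f y r' c' = 0"
    and x: "x \<in> tuples R ns (Suc j)" and r: "psum ns t \<le> r"
  shows "hoch_d ns j (row_contraction ns t j f) x r c = f x r c"
proof -
  consider "psum ns (Suc t) \<le> r"
    | "r < psum ns (Suc t)" "c < psum ns t"
    | "r < psum ns (Suc t)" "\<not> c < psum ns t"
    by linarith
  then show ?thesis
  proof cases
    case 1
    then show ?thesis using vanish x hoch_d_row_contraction_later_rows[OF x] by simp
  next
    case 2
    then show ?thesis using hoch_d_row_contraction_in_block[OF pos t f vanish x r] by simp
  next
    case 3
    then have "\<not> forced_zero ns r c" using forced_zero_in_block[OF t(2) r] by simp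
    moreover have "f x \<in> Qn R ns" using f x by (auto simp: cocycle_def intro: cochain_Qn)
    moreover have "hoch_d ns j (row_contraction ns t j f) x \<in> Qn R ns"
      using hoch_d_Qn[OF _ x] row_contraction_Qn[OF t(2)] by blast
    ultimately show ?thesis by (simp add: Qn_iff)
  qed
qed

lemma cocycle_minus_coboundary:
  assumes "cocycle R ns (Suc j) f" and "cochain R ns j g"
  shows "cocycle R ns (Suc j) (\<lambda>x. madd (f x) (msmult (-1) (hoch_d ns j g x)))"
  unfolding cocycle_def
proof (intro conjI ballI)
  show "cochain R ns (Suc j) (\<lambda>x. madd (f x) (msmult (-1) (hoch_d ns j g x)))"
    using assms by (simp add: cocycle_def cochain_lincomb cochain_hoch_d)
next
  fix x
  assume "x \<in> tuples R ns (Suc (Suc j))"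
  then show "hoch_d ns (Suc j) (\<lambda>x. madd (f x) (msmult (-1) (hoch_d ns j g x))) x = mzero"
    using assms(1) hoch_d_hoch_d[of x R ns j g] unfolding hoch_d_lincomb
    by (simp add: cocycle_def madd_def msmult_def mzero_def)
qed

lemma coboundary_if_rows_vanish:
  assumes pos: "\<forall>m\<in>set ns. 0 < m"
    and "cocycle R ns (Suc j) f"
    and "\<forall>x\<in>tuples R ns (Suc j). \<forall>r c. psum ns t \<le> r \<longrightarrow> f x r c = 0"
  shows "coboundary R ns j f"
  using assms(2,3)
proof (induction t arbitrary: f)
  case 0
  then have "\<forall>x\<in>tuples R ns (Suc j). f x = hoch_d ns j (\<lambda>x. mzero) x"
    unfolding hoch_d_zero by (auto simp: mzero_def fun_eq_iff)
  then show ?case using cochain_zero unfolding coboundary_def by blast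
next
  case (Suc t)
  consider "t = 0" | "length ns \<le> t" | "0 < t" "t < length ns" by linarith
  then show ?case
  proof cases
    case 1
    then have "\<forall>x\<in>tuples R ns (Suc j). \<forall>r c. psum ns t \<le> r \<longrightarrow> f x r c = 0"
      using Suc.prems forced_zero_first_block
      by (metis Qn_iff cochain_Qn cocycle_def not_le)
    then show ?thesis using Suc by blast
  next
    case 2
    then show ?thesis using Suc by (simp add: psum_length)
  next
    case 3
    let ?g = "row_contraction ns t j f"
    let ?f' = "\<lambda>x. madd (f x) (msmult (-1) (hoch_d ns j ?g x))"
    have g: "cochain R ns j ?g"
      using cochain_row_contraction[OF pos 3] Suc.prems(1) by (auto simp: cocycle_def)
    have "\<forall>x\<in>tuples R ns (Suc j). \<forall>r c. psum ns t \<le> r \<longrightarrow> ?f' x r c = 0"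
      using hoch_d_row_contraction[OF pos 3 Suc.prems] by (simp add: madd_def msmult_def)
    then obtain g' where
      g': "cochain R ns j g'" "\<forall>x\<in>tuples R ns (Suc j). ?f' x = hoch_d ns j g' x"
      using Suc.IH[OF cocycle_minus_coboundary[OF Suc.prems(1) g]] by (auto simp: coboundary_def)
    have "f x = hoch_d ns j (\<lambda>x. madd (?g x) (msmult 1 (g' x))) x"
      if "x \<in> tuples R ns (Suc j)" for x
      using g'(2) that unfolding hoch_d_lincomb
      by (auto simp: madd_def msmult_def fun_eq_iff algebra_simps)
    then show ?thesis
      using cochain_lincomb[OF g g'(1)] unfolding coboundary_def by blast
  qed
qed

theorem proposition4p15:
  fixes ns :: "nat list"
  assumes "\<forall>m\<in>set ns. 0 < m"
  shows "\<forall>i. HH_vanishes TYPE('r::comm_ring_1) ns i"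
proof
  fix i
  show "HH_vanishes TYPE('r) ns i"
  proof (cases i)
    case 0
    then show ?thesis using cocycle_degree_0 by (auto simp: HH_vanishes_def cocycle_def)
  next
    case (Suc j)
    have "coboundary TYPE('r) ns j f" if "cocycle TYPE('r) ns (Suc j) f" for f
    proof (rule coboundary_if_rows_vanish[OF assms that, of "length ns"])
      show "\<forall>x\<in>tuples TYPE('r) ns (Suc j). \<forall>r c. psum ns (length ns) \<le> r \<longrightarrow> f x r c = 0"
        using that Qn_mats cochain_Qn by (fastforce simp: cocycle_def mats_def psum_length)
    qed
    then show ?thesis using Suc by (auto simp: HH_vanishes_def cocycle_def coboundary_def)
  qed
qed

end
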